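(* Let $(d_i)_{i\ge1}$ be an alternate Lyndon word with alternate Lyndon system $M$, and suppose the entropy of $M$ equals $\log\beta>0$. Then $\beta$ is the largest real solution $x$ of $$-\frac{x}{x+1}=\sum_{n\ge1}\frac{d_n}{(-x)^n}.$$
   Context: Alternate order: for two words $x=x_1x_2\cdots$, $y=y_1y_2\cdots$ over a finite alphabet of integers, $x\prec y$ iff there is $k$ with $x_i=y_i$ for all $i<k$ and $(-1)^k(x_k-y_k)<0$; $x\preceq y$ iff $x=y$ or $x\prec y$. An alternate Lyndon word is an infinite word $(d_i)_{i\ge1}$ over a finite alphabet $\{0,\dots,d_1\}$ with $d_1d_2\cdots\preceq d_nd_{n+1}\cdots$ for all $n\ge1$. Its alternate Lyndon system $M$ is the set of infinite words $x_1x_2\cdots$ with $d_1d_2\cdots\preceq x_kx_{k+1}\cdots$ for all $k\ge1$. The entropy of $M$ is $\lim_{n\to\infty}\frac1n\log H_n$, where $H_n$ is the number of words of length $n$ occurring as finite factors of elements of $M$. *)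

theory Defs
  imports "HOL-Analysis.Analysis"
begin

text \<open>Infinite words are represented 0-based: a word x_1 x_2 ... is the function
  w :: nat \<Rightarrow> nat with w i = x_(i+1).  The shift by k is (\<lambda>i. w (i+k)).\<close>

definition alt_less :: "(nat \<Rightarrow> nat) \<Rightarrow> (nat \<Rightarrow> nat) \<Rightarrow> bool" where
  "alt_less x y \<longleftrightarrow>
     (\<exists>k. (\<forall>i<k. x i = y i) \<and> (-1::int) ^ (k + 1) * (int (x k) - int (y k)) < 0)"

definition alt_le :: "(nat \<Rightarrow> nat) \<Rightarrow> (nat \<Rightarrow> nat) \<Rightarrow> bool" where
  "alt_le x y \<longleftrightarrow> x = y \<or> alt_less x y"

definition shift :: "nat \<Rightarrow> (nat \<Rightarrow> nat) \<Rightarrow> (nat \<Rightarrow> nat)" where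
  "shift k x = (\<lambda>i. x (i + k))"

definition alt_lyndon :: "(nat \<Rightarrow> nat) \<Rightarrow> bool" where
  "alt_lyndon d \<longleftrightarrow> (\<forall>i. d i \<le> d 0) \<and> (\<forall>n. alt_le d (shift n d))"

definition alt_lyndon_system :: "(nat \<Rightarrow> nat) \<Rightarrow> (nat \<Rightarrow> nat) set" where
  "alt_lyndon_system d = {x. \<forall>k. alt_le d (shift k x)}"

definition factors :: "(nat \<Rightarrow> nat) set \<Rightarrow> nat \<Rightarrow> nat list set" where
  "factors M n = {map x [k..<k + n] | x k. x \<in> M}"

definition has_entropy :: "(nat \<Rightarrow> nat) set \<Rightarrow> real \<Rightarrow> bool" where
  "has_entropy M h \<longleftrightarrow> (\<lambda>n. ln (real (card (factors M n))) / real n) \<longlonglongrightarrow> h"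

definition char_solution :: "(nat \<Rightarrow> nat) \<Rightarrow> real \<Rightarrow> bool" where
  "char_solution d x \<longleftrightarrow> x \<noteq> 0 \<and> x \<noteq> -1 \<and>
     (\<lambda>n. real (d n) / (- x) ^ (n + 1)) sums (- x / (x + 1))"

end

theory Submission
  imports Defs
begin

text \<open>
  A finite word w is a factor of the alternate Lyndon system iff each of its suffixes is
  alternately not smaller than the prefix of d of the same length. Counting the admissible
  words N(n) by their first letter gives the linear recursion
  N(k+1) = [k+1 even] + sum_{i<=k} (-1)^i (d_i + 1) N(k-i),
  so with C(t) = sum_i (-1)^i (d_i + 1) t^i the generating function is
  sum_n N(n) t^n = E(t) / (1 - t C(t)) with 1 \<le> E(t) \<le> 1/(1-t).
  Since N is submultiplicative, N(n) \<ge> \<beta>^n, and the series converges for t < 1/\<beta>.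
  Hence 0 < 1 - t C(t) \<le> (1 - \<beta> t)/(1 - t) on (0, 1/\<beta>), which squeezes t C(t) to 1
  at t = 1/\<beta> and keeps it below 1 for smaller t. Finally, x is a solution of the
  characteristic equation with x > 1 iff (1/x) C(1/x) = 1.
\<close>

section \<open>The alternate order on finite words\<close>

text \<open>The alternate order alt_less on words of equal length: at the first
  difference an odd (1-based) position makes the larger letter smaller, so comparing
  tails swaps the roles of the two words.\<close>
function alt_lex_less :: "nat list \<Rightarrow> nat list \<Rightarrow> bool" where
  "alt_lex_less (a # u) (b # v) \<longleftrightarrow> b < a \<or> (a = b \<and> alt_lex_less v u)"
| "alt_lex_less [] v \<longleftrightarrow> False"
| "alt_lex_less (a # u) [] \<longleftrightarrow> False"
  by pat_completeness auto
termination by (relation "Wellfounded.measure (\<lambda>(u, v). length u + length v)") auto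

definition alt_lex_le :: "nat list \<Rightarrow> nat list \<Rightarrow> bool" where
  "alt_lex_le u v \<longleftrightarrow> u = v \<or> alt_lex_less u v"

lemma alt_lex_less_Nil2 [simp]: "\<not> alt_lex_less u []"
  by (cases u) auto

lemma alt_lex_less_irrefl: "\<not> alt_lex_less u u"
  by (induction u) auto

lemma alt_lex_less_asym: "alt_lex_less u v \<Longrightarrow> \<not> alt_lex_less v u"
  by (induction u arbitrary: v) (auto elim: alt_lex_less.elims)

lemma alt_lex_less_total:
  "length u = length v \<Longrightarrow> u \<noteq> v \<Longrightarrow> alt_lex_less u v \<or> alt_lex_less v u"
proof (induction u arbitrary: v)
  case (Cons a u)
  then show ?case by (cases v) auto
qed simp

text \<open>Because the recursion swaps the arguments, both orientations are proved together.\<close>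
lemma alt_lex_less_trans_both:
  "(alt_lex_less u v \<longrightarrow> alt_lex_less v w \<longrightarrow> alt_lex_less u w) \<and>
   (alt_lex_less w v \<longrightarrow> alt_lex_less v u \<longrightarrow> alt_lex_less w u)"
proof (induction u arbitrary: v w)
  case (Cons a u)
  then show ?case by (cases v; cases w) auto
qed (auto elim: alt_lex_less.elims)

lemma alt_lex_less_trans: "alt_lex_less u v \<Longrightarrow> alt_lex_less v w \<Longrightarrow> alt_lex_less u w"
  using alt_lex_less_trans_both by blast

lemma alt_lex_le_trans: "alt_lex_le u v \<Longrightarrow> alt_lex_le v w \<Longrightarrow> alt_lex_le u w"
  unfolding alt_lex_le_def using alt_lex_less_trans by blast

lemma alt_lex_le_antisym: "alt_lex_le u v \<Longrightarrow> alt_lex_le v u \<Longrightarrow> u = v"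
  unfolding alt_lex_le_def using alt_lex_less_asym by blast

lemma not_alt_lex_less_iff_le:
  "length u = length v \<Longrightarrow> \<not> alt_lex_less v u \<longleftrightarrow> alt_lex_le u v"
  unfolding alt_lex_le_def using alt_lex_less_total alt_lex_less_asym alt_lex_less_irrefl by blast

lemma alt_lex_le_Cons: "alt_lex_le (b # u) (a # v) \<longleftrightarrow> a < b \<or> (a = b \<and> alt_lex_le v u)"
  unfolding alt_lex_le_def by auto

lemma alt_lex_less_take_both:
  "(alt_lex_less (take j u) (take j v) \<longrightarrow> alt_lex_less u v) \<and>
   (alt_lex_less (take j v) (take j u) \<longrightarrow> alt_lex_less v u)"
proof (induction u arbitrary: v j)
  case (Cons a u)
  then show ?case by (cases v; cases j) auto
qed simp

definition take_word :: "(nat \<Rightarrow> nat) \<Rightarrow> nat \<Rightarrow> nat list" where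
  "take_word x n = map x [0..<n]"

lemma length_take_word [simp]: "length (take_word x n) = n"
  by (simp add: take_word_def)

lemma shift_0 [simp]: "shift 0 x = x"
  unfolding shift_def by simp

lemma take_word_shift_Suc: "take_word (shift j x) (Suc m) = x j # take_word (shift (Suc j) x) m"
  unfolding take_word_def shift_def by (simp add: map_upt_Suc del: upt_Suc)

lemma drop_factor: "drop j (map x [k..<k + n]) = take_word (shift (k + j) x) (n - j)"
  by (rule nth_equalityI) (auto simp: take_word_def shift_def add.commute add.left_commute)

lemma alt_less_if_take_word_less:
  "alt_lex_less (take_word x n) (take_word y n) \<Longrightarrow> alt_less x y"
proof (induction n arbitrary: x y)
  case 0
  then show ?case by (simp add: take_word_def)
next
  case (Suc n)
  from Suc.prems consider "y 0 < x 0"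
    | "x 0 = y 0" "alt_lex_less (take_word (shift 1 y) n) (take_word (shift 1 x) n)"
    using take_word_shift_Suc[of 0] by auto
  then show ?case
  proof cases
    case 1
    then show ?thesis unfolding alt_less_def by (intro exI[of _ 0]) auto
  next
    case 2
    then obtain k where k: "\<forall>i<k. y (i + 1) = x (i + 1)"
      "(-1::int) ^ (k + 1) * (int (y (k + 1)) - int (x (k + 1))) < 0"
      using Suc.IH[of "shift 1 y" "shift 1 x"] unfolding alt_less_def shift_def by auto
    have "\<forall>i<Suc k. x i = y i"
      using 2 k(1) by (auto simp: less_Suc_eq_0_disj)
    moreover have "(-1::int) ^ (Suc k + 1) * (int (x (Suc k)) - int (y (Suc k))) < 0"
      using k(2) by (simp add: algebra_simps)
    ultimately show ?thesis unfolding alt_less_def by blast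
  qed
qed

lemma alt_less_asym: "alt_less x y \<Longrightarrow> \<not> alt_less y x"
proof
  assume "alt_less x y" "alt_less y x"
  then obtain k l where
    k: "\<forall>i<k. x i = y i" "(-1::int) ^ (k + 1) * (int (x k) - int (y k)) < 0" and
    l: "\<forall>i<l. y i = x i" "(-1::int) ^ (l + 1) * (int (y l) - int (x l)) < 0"
    unfolding alt_less_def by blast
  show False
  proof (cases k l rule: linorder_cases)
    case equal
    then show ?thesis using k l by (simp add: algebra_simps)
  qed (use k l in auto)
qed

lemma not_take_word_less_if_alt_le:
  "alt_le d y \<Longrightarrow> \<not> alt_lex_less (take_word y m) (take_word d m)"
  unfolding alt_le_def
  using alt_lex_less_irrefl alt_less_if_take_word_less alt_less_asym by blast

section \<open>The factors of an alternate Lyndon system\<close>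

definition admissible_words :: "(nat \<Rightarrow> nat) \<Rightarrow> nat \<Rightarrow> nat list set" where
  "admissible_words d n =
     {w. length w = n \<and> (\<forall>k\<le>n. \<not> alt_lex_less (drop k w) (take_word d (n - k)))}"

lemma factor_admissible:
  "x \<in> alt_lyndon_system d \<Longrightarrow> map x [k..<k + n] \<in> admissible_words d n"
  unfolding admissible_words_def alt_lyndon_system_def
  using not_take_word_less_if_alt_le drop_factor by auto

text \<open>An admissible word is continued by the tail of d, starting at the first position from
  which it already coincides with a prefix of d.\<close>
lemma splice_factor:
  assumes lyn: "alt_lyndon d" and "k \<le> length w"
    and less: "\<And>j. j < k \<Longrightarrow> alt_lex_less (take_word d (length w - j)) (drop j w)"
    and tail: "drop k w = take_word d (length w - k)"
  shows "w \<in> factors (alt_lyndon_system d) (length w)"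
proof -
  define x where "x i = (if i < k then w ! i else d (i - k))" for i
  have prefix: "map x [0..<0 + length w] = w"
  proof (rule nth_equalityI)
    fix i assume "i < length (map x [0..<0 + length w])"
    moreover have "\<not> i < k \<Longrightarrow> i < length w \<Longrightarrow> w ! i = d (i - k)"
      using arg_cong[OF tail, of "\<lambda>u. u ! (i - k)"] \<open>k \<le> length w\<close>
      by (simp add: take_word_def)
    ultimately show "map x [0..<0 + length w] ! i = w ! i" by (simp add: x_def)
  qed simp
  have "alt_le d (shift j x)" for j
  proof (cases "j < k")
    case False
    then have "shift j x = shift (j - k) d"
      unfolding shift_def x_def by (auto intro!: ext)
    then show ?thesis using lyn unfolding alt_lyndon_def by simp
  next
    case True
    have "take_word (shift j x) (length w - j) = drop j w"
      using drop_factor[of j x 0 "length w"] prefix by simp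
    then show ?thesis
      using alt_less_if_take_word_less less[OF True] unfolding alt_le_def by metis
  qed
  then have "x \<in> alt_lyndon_system d" unfolding alt_lyndon_system_def by blast
  with prefix[symmetric] show ?thesis unfolding factors_def by blast
qed

lemma admissible_factor:
  assumes lyn: "alt_lyndon d" and w: "w \<in> admissible_words d n"
  shows "w \<in> factors (alt_lyndon_system d) n"
proof -
  have len: "length w = n"
    and adm: "\<And>k. k \<le> n \<Longrightarrow> \<not> alt_lex_less (drop k w) (take_word d (n - k))"
    using w unfolding admissible_words_def by auto
  define P where "P k \<longleftrightarrow> k \<le> n \<and> drop k w = take_word d (n - k)" for k
  define k where "k = (LEAST k. P k)"
  have "P n" unfolding P_def using len by (simp add: take_word_def)
  then have "P k" unfolding k_def by (rule LeastI)
  have "alt_lex_less (take_word d (n - j)) (drop j w)" if "j < k" for j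
  proof -
    have "j \<le> n" using \<open>P k\<close> that unfolding P_def by simp
    moreover have "\<not> P j" using that unfolding k_def by (rule not_less_Least)
    ultimately show ?thesis
      using adm[of j] alt_lex_less_total[of "drop j w" "take_word d (n - j)"] len
      unfolding P_def by auto
  qed
  then show ?thesis
    using splice_factor[OF lyn, of k w] \<open>P k\<close> len unfolding P_def by blast
qed

lemma factors_alt_lyndon_system:
  assumes "alt_lyndon d"
  shows "factors (alt_lyndon_system d) n = admissible_words d n"
proof
  show "factors (alt_lyndon_system d) n \<subseteq> admissible_words d n"
    unfolding factors_def using factor_admissible by blast
qed (use admissible_factor[OF assms] in blast)

section \<open>Counting admissible words\<close>

lemma admissible_words_0: "admissible_words d 0 = {[]}"
  unfolding admissible_words_def by (auto simp: take_word_def)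

lemma admissible_words_Cons:
  "a # w \<in> admissible_words d (Suc m) \<longleftrightarrow>
     w \<in> admissible_words d m \<and> \<not> alt_lex_less (a # w) (take_word d (Suc m))"
proof -
  have "(\<forall>k\<le>Suc m. P k) \<longleftrightarrow> P 0 \<and> (\<forall>k\<le>m. P (Suc k))" for P
    by (metis Suc_le_mono le0 not0_implies_Suc)
  then show ?thesis unfolding admissible_words_def by auto
qed

lemma admissible_word_letters:
  assumes "w \<in> admissible_words d n"
  shows "set w \<subseteq> {..d 0}"
proof
  fix c assume "c \<in> set w"
  then obtain i where i: "i < length w" "w ! i = c" by (auto simp: in_set_conv_nth)
  have "length w = n" and "\<not> alt_lex_less (drop i w) (take_word d (n - i))"
    using assms i unfolding admissible_words_def by auto
  moreover have "drop i w = w ! i # drop (Suc i) w"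
    using i(1) by (rule Cons_nth_drop_Suc[symmetric])
  moreover have "take_word d (n - i) = d 0 # take_word (shift 1 d) (n - Suc i)"
    using i \<open>length w = n\<close> take_word_shift_Suc[of 0 d "n - Suc i"] by (simp add: Suc_diff_Suc)
  ultimately show "c \<in> {..d 0}" using i by auto
qed

lemma finite_admissible_words: "finite (admissible_words d n)"
proof (rule finite_subset)
  show "admissible_words d n \<subseteq> {w. set w \<subseteq> {..d 0} \<and> length w = n}"
    using admissible_word_letters unfolding admissible_words_def by auto
qed (simp add: finite_lists_length_eq)

lemma take_word_shift_admissible:
  assumes "alt_lyndon d"
  shows "take_word (shift j d) m \<in> admissible_words d m"
proof -
  have "d \<in> alt_lyndon_system d"
    using assms unfolding alt_lyndon_def alt_lyndon_system_def by simp
  moreover have "map d [j..<j + m] = take_word (shift j d) m"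
    using drop_factor[of 0 d j m] by simp
  ultimately show ?thesis using factor_admissible by metis
qed

lemma take_word_le_admissible:
  "w \<in> admissible_words d m \<Longrightarrow> alt_lex_le (take_word d m) w"
  unfolding admissible_words_def using not_alt_lex_less_iff_le[of "take_word d m" w] by auto

text \<open>When d_j = d_0 the Lyndon inequality at j is decided after the first letter, where the
  alternate order is reversed.\<close>
lemma take_word_shift_le_if_max_letter:
  assumes "alt_lyndon d" "d j = d 0"
  shows "alt_lex_le (take_word (shift (Suc j) d) m) (take_word (shift 1 d) m)"
proof -
  have "\<not> alt_lex_less (take_word (shift j d) (Suc m)) (take_word (shift 0 d) (Suc m))"
    using assms(1) not_take_word_less_if_alt_le unfolding alt_lyndon_def by simp
  then show ?thesis
    using assms(2) not_alt_lex_less_iff_le by (simp only: take_word_shift_Suc) simp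
qed

definition num_admissible :: "(nat \<Rightarrow> nat) \<Rightarrow> nat \<Rightarrow> nat" where
  "num_admissible d m = card (admissible_words d m)"

definition num_above :: "(nat \<Rightarrow> nat) \<Rightarrow> nat \<Rightarrow> nat \<Rightarrow> nat" where
  "num_above d j m =
     card {w \<in> admissible_words d m. alt_lex_le (take_word (shift j d) m) w}"

definition num_below :: "(nat \<Rightarrow> nat) \<Rightarrow> nat \<Rightarrow> nat \<Rightarrow> nat" where
  "num_below d j m =
     card {w \<in> admissible_words d m. alt_lex_le w (take_word (shift j d) m)}"

lemma num_admissible_0: "num_admissible d 0 = 1"
  by (simp add: num_admissible_def admissible_words_0)

lemma num_admissible_pos:
  assumes "alt_lyndon d"
  shows "num_admissible d n > 0"
  using take_word_shift_admissible[OF assms, of 0 n] finite_admissible_words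
  unfolding num_admissible_def by (auto simp: card_gt_0_iff)

lemma num_above_0: "num_above d 0 m = num_admissible d m"
  unfolding num_above_def num_admissible_def using take_word_le_admissible
  by (metis (mono_tags, lifting) Collect_cong admissible_words_def mem_Collect_eq shift_0)

lemma num_above_empty_word: "num_above d j 0 = 1"
proof -
  have "{w \<in> admissible_words d 0. alt_lex_le (take_word (shift j d) 0) w} = {[]}"
    by (auto simp: admissible_words_0 take_word_def alt_lex_le_def)
  then show ?thesis unfolding num_above_def by simp
qed

text \<open>The prefix of the shifted word is counted on both sides.\<close>
lemma num_below_plus_above:
  assumes "alt_lyndon d"
  shows "num_below d j m + num_above d j m = num_admissible d m + 1"
proof -
  let ?p = "take_word (shift j d) m"
  let ?A = "{w \<in> admissible_words d m. alt_lex_le w ?p}"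
  let ?B = "{w \<in> admissible_words d m. alt_lex_le ?p w}"
  have "?A \<union> ?B = admissible_words d m"
    using not_alt_lex_less_iff_le[of _ ?p] not_alt_lex_less_iff_le[of ?p]
    unfolding admissible_words_def alt_lex_le_def by auto
  moreover have "?A \<inter> ?B = {?p}"
    using take_word_shift_admissible[OF assms] alt_lex_le_antisym
    unfolding alt_lex_le_def by auto
  ultimately show ?thesis
    using card_Un_Int[of ?A ?B] finite_admissible_words
    unfolding num_below_def num_above_def num_admissible_def by simp
qed

text \<open>A word a # w lies above d_j d_(j+1) ... iff a < d_j, or a = d_j and w lies below
  d_(j+1) ...; since d_j \<le> d_0, such a word violates admissibility at position 0 only if
  d_j = d_0, which the previous lemma excludes.\<close>
lemma num_above_Suc:
  assumes lyn: "alt_lyndon d"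
  shows "num_above d j (Suc m) = d j * num_admissible d m + num_below d (Suc j) m"
proof -
  let ?u = "take_word (shift (Suc j) d) m" and ?d1 = "take_word (shift 1 d) m"
  let ?S = "{w \<in> admissible_words d (Suc m). alt_lex_le (take_word (shift j d) (Suc m)) w}"
  let ?X = "(\<lambda>(a, w). a # w) ` ({..<d j} \<times> admissible_words d m)"
  let ?Y = "Cons (d j) ` {w \<in> admissible_words d m. alt_lex_le w ?u}"
  have dj: "d j \<le> d 0" using lyn unfolding alt_lyndon_def by blast
  have mem: "a # w \<in> ?S \<longleftrightarrow> w \<in> admissible_words d m
      \<and> \<not> (d 0 < a \<or> (a = d 0 \<and> alt_lex_less ?d1 w))
      \<and> (a < d j \<or> (a = d j \<and> alt_lex_le w ?u))" for a w
    using take_word_shift_Suc[of 0 d m]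
    by (simp add: admissible_words_Cons take_word_shift_Suc alt_lex_le_Cons)
  have "?S = ?X \<union> ?Y"
  proof (intro set_eqI iffI)
    fix x assume x: "x \<in> ?S"
    then obtain a w where "x = a # w" unfolding admissible_words_def by (cases x) auto
    then show "x \<in> ?X \<union> ?Y" using mem[of a w] x by auto
  next
    fix x assume "x \<in> ?X \<union> ?Y"
    then show "x \<in> ?S"
    proof
      assume "x \<in> ?X"
      then obtain a w where "x = a # w" "a < d j" "w \<in> admissible_words d m" by auto
      then show ?thesis using mem[of a w] dj by auto
    next
      assume "x \<in> ?Y"
      then obtain w where w: "x = d j # w" "w \<in> admissible_words d m" "alt_lex_le w ?u"
        by auto
      have "\<not> alt_lex_less ?d1 w" if "d j = d 0"
        using alt_lex_le_trans[OF w(3) take_word_shift_le_if_max_letter[OF lyn that]]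
          alt_lex_less_asym alt_lex_less_irrefl unfolding alt_lex_le_def by blast
      then show ?thesis using mem[of "d j" w] w dj by auto
    qed
  qed
  moreover have "card ?X = d j * num_admissible d m"
    by (subst card_image) (auto simp: inj_on_def card_cartesian_product num_admissible_def)
  moreover have "card ?Y = num_below d (Suc j) m"
    by (simp add: card_image num_below_def)
  moreover have "?X \<inter> ?Y = {}" "finite ?X" "finite ?Y"
    using finite_admissible_words by auto
  ultimately show ?thesis unfolding num_above_def by (simp add: card_Un_disjoint)
qed

lemma num_above_Suc_eq:
  assumes "alt_lyndon d"
  shows "real (num_above d j (Suc m)) =
    (real (d j) + 1) * real (num_admissible d m) + 1 - real (num_above d (Suc j) m)"
proof -
  have "real (num_below d (Suc j) m) = real (num_admissible d m) + 1 - real (num_above d (Suc j) m)"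
    using num_below_plus_above[OF assms, of "Suc j" m] by linarith
  then show ?thesis using num_above_Suc[OF assms, of j m] by (simp add: algebra_simps)
qed

lemma num_above_unfold:
  assumes "alt_lyndon d"
  shows "real (num_above d j n) =
    (\<Sum>i<n. (-1) ^ i * ((real (d (j + i)) + 1) * real (num_admissible d (n - 1 - i)) + 1))
    + (-1) ^ n"
proof (induction n arbitrary: j)
  case 0
  then show ?case by (simp add: num_above_empty_word)
next
  case (Suc n)
  have shifted: "(\<Sum>i<n. (-1) ^ Suc i * ((real (d (j + Suc i)) + 1)
        * real (num_admissible d (Suc n - 1 - Suc i)) + 1))
      = - (\<Sum>i<n. (-1) ^ i * ((real (d (Suc j + i)) + 1)
        * real (num_admissible d (n - 1 - i)) + 1))"
    by (simp add: sum_negf[symmetric])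
  show ?case
    using num_above_Suc_eq[OF assms, of j n] Suc.IH[of "Suc j"] shifted
    by (simp add: sum.lessThan_Suc_shift del: sum.lessThan_Suc)
qed

definition char_coeff :: "(nat \<Rightarrow> nat) \<Rightarrow> nat \<Rightarrow> real" where
  "char_coeff d i = (-1) ^ i * (real (d i) + 1)"

lemma num_admissible_Suc:
  assumes "alt_lyndon d"
  shows "real (num_admissible d (Suc k)) =
    of_bool (even (Suc k)) + (\<Sum>i\<le>k. char_coeff d i * real (num_admissible d (k - i)))"
proof -
  have alternating: "(\<Sum>i<n. (-1::real) ^ i) + (-1) ^ n = of_bool (even n)" for n
    by (induction n) auto
  have "real (num_admissible d (Suc k)) = real (num_above d 0 (Suc k))"
    by (simp add: num_above_0)
  also have "\<dots> = (\<Sum>i<Suc k. char_coeff d i * real (num_admissible d (k - i)))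
      + ((\<Sum>i<Suc k. (-1) ^ i) + (-1) ^ Suc k)"
    using num_above_unfold[OF assms, of 0 "Suc k"]
    by (simp add: char_coeff_def sum.distrib algebra_simps)
  finally show ?thesis
    using alternating[of "Suc k"] by (simp add: lessThan_Suc_atMost)
qed

lemma drop_admissible:
  assumes "w \<in> admissible_words d (m + n)"
  shows "drop m w \<in> admissible_words d n"
  using assms unfolding admissible_words_def
  by (auto simp: add.commute dest: spec[where x = "m + _"])

lemma take_admissible:
  assumes "w \<in> admissible_words d (m + n)"
  shows "take m w \<in> admissible_words d m"
  unfolding admissible_words_def
proof (safe)
  fix k assume "k \<le> m" and less: "alt_lex_less (drop k (take m w)) (take_word d (m - k))"
  have "drop k (take m w) = take (m - k) (drop k w)"
    by (simp add: drop_take)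
  moreover have "take_word d (m - k) = take (m - k) (take_word d (m + n - k))"
    unfolding take_word_def using \<open>k \<le> m\<close> by (simp add: take_map)
  ultimately have "alt_lex_less (drop k w) (take_word d (m + n - k))"
    using less alt_lex_less_take_both by metis
  then show False
    using assms \<open>k \<le> m\<close> unfolding admissible_words_def by simp
qed (use assms in \<open>simp add: admissible_words_def\<close>)

lemma num_admissible_add_le:
  "num_admissible d (m + n) \<le> num_admissible d m * num_admissible d n"
proof -
  have "inj_on (\<lambda>w. (take m w, drop m w)) (admissible_words d (m + n))"
    by (rule inj_onI) (metis append_take_drop_id prod.inject)
  moreover have "(\<lambda>w. (take m w, drop m w)) ` admissible_words d (m + n)
      \<subseteq> admissible_words d m \<times> admissible_words d n"
    using take_admissible drop_admissible by auto
  ultimately have "card (admissible_words d (m + n))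
      \<le> card (admissible_words d m \<times> admissible_words d n)"
    by (intro card_inj_on_le) (auto simp: finite_admissible_words)
  then show ?thesis by (simp add: num_admissible_def card_cartesian_product)
qed

section \<open>Exponential growth rates\<close>

lemma submultiplicative_power_bound:
  fixes a :: "nat \<Rightarrow> real"
  assumes pos: "\<And>n. 0 < a n" and submult: "\<And>m n. a (m + n) \<le> a m * a n"
  shows "a (Suc k * n) \<le> a n ^ Suc k"
proof (induction k)
  case (Suc k)
  have "a (Suc (Suc k) * n) \<le> a n * a (Suc k * n)"
    using submult[of n "Suc k * n"] by simp
  also have "\<dots> \<le> a n * a n ^ Suc k"
    using Suc pos[of n] by (intro mult_left_mono) auto
  finally show ?case by simp
qed simp

text \<open>As in Fekete's lemma, ln (a n) / n bounds the growth rate of a submultiplicative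
  sequence from above, via the subsequence a (k n).\<close>
lemma submultiplicative_exp_growth_le:
  fixes a :: "nat \<Rightarrow> real"
  assumes pos: "\<And>n. 0 < a n" and submult: "\<And>m n. a (m + n) \<le> a m * a n"
    and lim: "(\<lambda>n. ln (a n) / real n) \<longlonglongrightarrow> L"
  shows "exp (real n * L) \<le> a n"
proof (cases "n = 0")
  case True
  have "a 0 * 1 \<le> a 0 * a 0" using submult[of 0 0] by simp
  then show ?thesis using True pos[of 0] by (simp add: mult_le_cancel_left_pos)
next
  case False
  have bound: "ln (a (Suc k * n)) / real (Suc k * n) \<le> ln (a n) / real n" for k
  proof -
    have "ln (a (Suc k * n)) \<le> ln (a n ^ Suc k)"
      using submultiplicative_power_bound[OF pos submult] pos by simp
    also have "\<dots> = real (Suc k) * ln (a n)"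
      using pos[of n] by (simp add: ln_realpow del: power_Suc of_nat_Suc)
    finally have "ln (a (Suc k * n)) / real (Suc k * n)
        \<le> real (Suc k) * ln (a n) / real (Suc k * n)"
      by (rule divide_right_mono) simp
    also have "\<dots> = ln (a n) / real n"
      using False by (simp only: of_nat_mult) (simp del: of_nat_Suc)
    finally show ?thesis .
  qed
  have "strict_mono (\<lambda>k. Suc k * n)"
    using False by (auto simp: strict_mono_def)
  then have "(\<lambda>k. ln (a (Suc k * n)) / real (Suc k * n)) \<longlonglongrightarrow> L"
    using LIMSEQ_subseq_LIMSEQ[OF lim] unfolding comp_def by blast
  then have "L \<le> ln (a n) / real n"
    using LIMSEQ_le_const2 bound by blast
  then have "real n * L \<le> ln (a n)"
    using False by (simp add: field_simps)
  then show ?thesis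
    using pos[of n] by (metis exp_le_cancel_iff exp_ln)
qed

lemma summable_below_exp_growth:
  fixes a :: "nat \<Rightarrow> real"
  assumes pos: "\<And>n. 0 < a n" and lim: "(\<lambda>n. ln (a n) / real n) \<longlonglongrightarrow> L"
    and t: "0 \<le> t" "t * exp L < 1"
  shows "summable (\<lambda>n. a n * t ^ n)"
proof (cases "t = 0")
  case True
  then show ?thesis using powser_sums_zero sums_summable by blast
next
  case False
  then have "exp L < 1 / t" using t by (simp add: field_simps)
  then obtain r where r: "exp L < r" "r < 1 / t" using dense by blast
  then have "0 < r" "r * t < 1" using t False exp_gt_zero[of L]
    by (auto simp: field_simps simp del: exp_gt_zero)
  have "L < ln r"
    using r(1) \<open>0 < r\<close> by (metis exp_gt_zero ln_exp ln_less_cancel_iff)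
  then have "eventually (\<lambda>n. ln (a n) / real n < ln r) sequentially"
    using lim by (rule order_tendstoD(2)[rotated])
  then have "eventually (\<lambda>n. norm (a n * t ^ n) \<le> (r * t) ^ n) sequentially"
    using eventually_gt_at_top[of 0]
  proof eventually_elim
    case (elim n)
    then have "a n < exp (real n * ln r)"
      using pos[of n] by (simp add: field_simps) (metis exp_less_cancel_iff exp_ln)
    then have "a n \<le> r ^ n" using \<open>0 < r\<close> by (simp add: exp_of_nat_mult)
    then show ?case
      using t pos[of n] by (simp add: power_mult_distrib mult_right_mono)
  qed
  moreover have "summable (\<lambda>n. (r * t) ^ n)"
    using \<open>0 < r\<close> \<open>r * t < 1\<close> t by (intro summable_geometric) simp
  ultimately show ?thesis by (rule summable_comparison_test_ev)
qed

section \<open>The generating function of the admissible words\<close>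

definition char_fun :: "(nat \<Rightarrow> nat) \<Rightarrow> real \<Rightarrow> real" where
  "char_fun d t = t * (\<Sum>i. char_coeff d i * t ^ i)"

lemma summable_char_coeff:
  assumes "alt_lyndon d" "0 \<le> t" "t < 1"
  shows "summable (\<lambda>i. norm (char_coeff d i * t ^ i))"
proof (rule summable_comparison_test_ev)
  have "\<bar>char_coeff d i\<bar> \<le> real (d 0) + 1" for i
    using assms(1) unfolding alt_lyndon_def char_coeff_def by (simp add: abs_mult)
  then show "eventually (\<lambda>i. norm (norm (char_coeff d i * t ^ i)) \<le> (real (d 0) + 1) * t ^ i)
      sequentially"
    using assms(2) by (intro always_eventually allI) (auto simp: abs_mult intro!: mult_right_mono)
  show "summable (\<lambda>i. (real (d 0) + 1) * t ^ i)"
    using assms by (intro summable_mult summable_geometric) simp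
qed

lemma summable_even_powser:
  fixes t :: real
  assumes "0 \<le> t" "t < 1"
  shows "summable (\<lambda>n. of_bool (even n) * t ^ n)"
  by (rule summable_comparison_test_ev[where g = "\<lambda>n. t ^ n"])
     (use assms in \<open>auto intro!: summable_geometric\<close>)

lemma even_powser_bounds:
  fixes t :: real
  assumes "0 \<le> t" "t < 1"
  shows "1 \<le> (\<Sum>n. of_bool (even n) * t ^ n)" "(\<Sum>n. of_bool (even n) * t ^ n) \<le> 1 / (1 - t)"
proof -
  note s = summable_even_powser[OF assms]
  have "(\<Sum>n<1. of_bool (even n) * t ^ n) \<le> (\<Sum>n. of_bool (even n) * t ^ n)"
    using assms by (intro sum_le_suminf[OF s]) auto
  then show "1 \<le> (\<Sum>n. of_bool (even n) * t ^ n)" by simp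
  have "(\<Sum>n. of_bool (even n) * t ^ n) \<le> (\<Sum>n. t ^ n)"
    using assms s by (intro suminf_le) (auto intro!: summable_geometric)
  then show "(\<Sum>n. of_bool (even n) * t ^ n) \<le> 1 / (1 - t)"
    using suminf_geometric[of t] assms by simp
qed

text \<open>The recursion for the number of admissible words, read as a Cauchy product.\<close>
lemma admissible_powser_eq:
  assumes lyn: "alt_lyndon d" and t: "0 \<le> t" "t < 1"
    and summable: "summable (\<lambda>n. real (num_admissible d n) * t ^ n)"
  shows "(\<Sum>n. real (num_admissible d n) * t ^ n)
    = (\<Sum>n. of_bool (even n) * t ^ n) + char_fun d t * (\<Sum>n. real (num_admissible d n) * t ^ n)"
proof -
  let ?a = "\<lambda>i. char_coeff d i * t ^ i" and ?b = "\<lambda>n. real (num_admissible d n) * t ^ n"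
  let ?e = "\<lambda>n. of_bool (even n) * t ^ n :: real"
  have "summable (\<lambda>n. norm (?b n))" using summable t by simp
  then have cauchy: "(\<lambda>k. \<Sum>i\<le>k. ?a i * ?b (k - i)) sums ((\<Sum>k. ?a k) * (\<Sum>k. ?b k))"
    by (rule Cauchy_product_sums[OF summable_char_coeff[OF lyn t]])
  have convolution: "(\<Sum>i\<le>k. ?a i * ?b (k - i))
      = t ^ k * (\<Sum>i\<le>k. char_coeff d i * real (num_admissible d (k - i)))" for k
  proof -
    have "?a i * ?b (k - i) = t ^ k * (char_coeff d i * real (num_admissible d (k - i)))"
      if "i \<le> k" for i
      using that by (simp add: algebra_simps flip: power_add)
    then show ?thesis unfolding sum_distrib_left by (intro sum.cong) auto
  qed
  have products:
    "(\<lambda>k. t ^ Suc k * (\<Sum>i\<le>k. char_coeff d i * real (num_admissible d (k - i))))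
      sums (char_fun d t * (\<Sum>k. ?b k))"
    using sums_mult[OF cauchy, of t] convolution unfolding char_fun_def
    by (simp add: algebra_simps)
  have evens: "(\<lambda>k. ?e (Suc k)) sums ((\<Sum>n. ?e n) - 1)"
    using sums_Suc_iff[of ?e] summable_sums[OF summable_even_powser[OF t]] by simp
  have "?b (Suc k) = ?e (Suc k)
      + t ^ Suc k * (\<Sum>i\<le>k. char_coeff d i * real (num_admissible d (k - i)))" for k
    using num_admissible_Suc[OF lyn, of k] by (simp add: algebra_simps)
  then have "(\<lambda>k. ?b (Suc k)) sums ((\<Sum>n. ?e n) - 1 + char_fun d t * (\<Sum>k. ?b k))"
    using sums_add[OF evens products] by simp
  then have "?b sums ((\<Sum>n. ?e n) + char_fun d t * (\<Sum>k. ?b k))"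
    using sums_Suc_iff[of ?b] by (simp add: num_admissible_0)
  then show ?thesis by (simp add: sums_iff)
qed

lemma char_solution_iff:
  assumes lyn: "alt_lyndon d" and x: "1 < x"
  shows "char_solution d x \<longleftrightarrow> char_fun d (1 / x) = 1"
proof -
  define t where "t = 1 / x"
  have t: "0 < t" "t < 1" using x by (auto simp: t_def)
  have "(\<lambda>i. char_coeff d i * t ^ i) sums (\<Sum>i. char_coeff d i * t ^ i)"
    using summable_norm_cancel[OF summable_char_coeff[OF lyn]] t by (simp add: summable_sums)
  moreover have "(\<lambda>i. t * (-t) ^ i) sums (t / (1 + t))"
    using sums_mult[OF geometric_sums[of "-t"], of t] t by simp
  ultimately have
    "(\<lambda>i. t * (-t) ^ i - t * (char_coeff d i * t ^ i)) sums (t / (1 + t) - char_fun d t)"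
    unfolding char_fun_def by (intro sums_diff sums_mult)
  moreover have "t * (-t) ^ i - t * (char_coeff d i * t ^ i) = real (d i) / (- x) ^ (i + 1)" for i
  proof -
    have "(- x) ^ (i + 1) * (- t) ^ (i + 1) = ((- x) * (- t)) ^ (i + 1)"
      by (rule power_mult_distrib[symmetric])
    also have "(- x) * (- t) = 1" using x by (simp add: t_def)
    finally have inverse: "(- x) ^ (i + 1) * (- t) ^ (i + 1) = 1" by simp
    then have "(- x) ^ (i + 1) \<noteq> 0" by auto
    with inverse have "real (d i) / (- x) ^ (i + 1) = real (d i) * (- t) ^ (i + 1)"
      by (simp add: field_simps)
    moreover have "char_coeff d i * t ^ i = (real (d i) + 1) * (- t) ^ i"
      by (simp add: char_coeff_def power_minus')
    ultimately show ?thesis by (simp add: algebra_simps)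
  qed
  ultimately have "(\<lambda>i. real (d i) / (- x) ^ (i + 1)) sums (t / (1 + t) - char_fun d t)"
    by simp
  moreover have "- x / (x + 1) = t / (1 + t) - 1"
    using x by (simp add: t_def field_simps)
  ultimately show ?thesis
    unfolding char_solution_def t_def using x sums_unique2 by fastforce
qed

section \<open>The characteristic function at the inverse growth rate\<close>

lemma char_fun_bounds:
  assumes lyn: "alt_lyndon d" and "1 < \<beta>"
    and lim: "(\<lambda>n. ln (real (num_admissible d n)) / real n) \<longlonglongrightarrow> ln \<beta>"
    and t: "0 < t" "t * \<beta> < 1"
  shows "0 < 1 - char_fun d t" and "1 - char_fun d t \<le> (1 - \<beta> * t) / (1 - t)"
proof -
  let ?N = "\<lambda>n. real (num_admissible d n)"
  have pos: "\<And>n. 0 < ?N n" using num_admissible_pos[OF lyn] by simp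
  have submult: "\<And>m n. ?N (m + n) \<le> ?N m * ?N n"
    using num_admissible_add_le by (metis of_nat_le_iff of_nat_mult)
  have "t < 1" "0 \<le> \<beta> * t" "\<beta> * t < 1"
    using t \<open>1 < \<beta>\<close> by (auto simp: mult.commute intro: le_less_trans[of t "t * \<beta>"])
  have summable: "summable (\<lambda>n. ?N n * t ^ n)"
    using summable_below_exp_growth[OF pos lim] t \<open>1 < \<beta>\<close> by simp
  define F where "F = (\<Sum>n. ?N n * t ^ n)"
  define E where "E = (\<Sum>n. of_bool (even n) * t ^ n :: real)"
  have "F = E + char_fun d t * F"
    using admissible_powser_eq[OF lyn _ \<open>t < 1\<close> summable] t unfolding F_def E_def by simp
  have E: "1 \<le> E" "E \<le> 1 / (1 - t)"
    using even_powser_bounds t \<open>t < 1\<close> unfolding E_def by auto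
  have "(\<Sum>n. (\<beta> * t) ^ n) \<le> F"
    unfolding F_def
  proof (rule suminf_le)
    show "(\<beta> * t) ^ n \<le> ?N n * t ^ n" for n
      using submultiplicative_exp_growth_le[OF pos submult lim, of n] \<open>1 < \<beta>\<close> t
      by (simp add: exp_of_nat_mult power_mult_distrib mult_right_mono)
    show "summable (\<lambda>n. (\<beta> * t) ^ n)"
      using \<open>0 \<le> \<beta> * t\<close> \<open>\<beta> * t < 1\<close> by (intro summable_geometric) simp
  qed (rule summable)
  then have F: "1 / (1 - \<beta> * t) \<le> F"
    using suminf_geometric[of "\<beta> * t"] \<open>0 \<le> \<beta> * t\<close> \<open>\<beta> * t < 1\<close> by simp
  moreover have "0 < 1 / (1 - \<beta> * t)" using \<open>\<beta> * t < 1\<close> by simp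
  ultimately have "0 < F" by linarith
  with \<open>F = E + char_fun d t * F\<close> have quotient: "1 - char_fun d t = E / F"
    by (simp add: field_simps)
  then show "0 < 1 - char_fun d t" using E \<open>0 < F\<close> by simp
  have "E / F \<le> (1 / (1 - t)) / (1 / (1 - \<beta> * t))"
    using E F \<open>0 < F\<close> \<open>\<beta> * t < 1\<close> \<open>t < 1\<close> by (intro frac_le) auto
  then show "1 - char_fun d t \<le> (1 - \<beta> * t) / (1 - t)" using quotient by simp
qed

lemma isCont_char_fun:
  assumes "alt_lyndon d" "0 \<le> t" "t < 1"
  shows "isCont (char_fun d) t"
proof -
  have "summable (\<lambda>n. char_coeff d n * ((1 + t) / 2) ^ n)"
    using summable_norm_cancel[OF summable_char_coeff[OF assms(1)]] assms(2,3) by simp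
  then have "isCont (\<lambda>t. \<Sum>n. char_coeff d n * t ^ n) t"
    by (rule isCont_powser) (use assms in simp)
  then show ?thesis unfolding char_fun_def[abs_def] by (intro isCont_mult continuous_ident)
qed

text \<open>Both bounds of the previous lemma tend to 0 as t increases to 1/\<beta>.\<close>
lemma char_fun_inverse_growth_rate:
  assumes lyn: "alt_lyndon d" and "1 < \<beta>"
    and lim: "(\<lambda>n. ln (real (num_admissible d n)) / real n) \<longlonglongrightarrow> ln \<beta>"
  shows "char_fun d (1 / \<beta>) = 1"
proof -
  define t0 where "t0 = 1 / \<beta>"
  have t0: "0 < t0" "t0 < 1" using \<open>1 < \<beta>\<close> by (auto simp: t0_def)
  have "(char_fun d \<longlongrightarrow> char_fun d t0) (at_left t0)"
    using isCont_char_fun[OF lyn less_imp_le[OF t0(1)] t0(2)] unfolding isCont_def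
    by (rule tendsto_mono[rotated]) (rule at_within_le_at)
  then have lhs: "((\<lambda>t. 1 - char_fun d t) \<longlongrightarrow> 1 - char_fun d t0) (at_left t0)"
    by (rule tendsto_diff[OF tendsto_const])
  have "((\<lambda>t. (1 - \<beta> * t) / (1 - t)) \<longlongrightarrow> (1 - \<beta> * t0) / (1 - t0)) (at_left t0)"
    using t0 by (intro tendsto_intros) auto
  moreover have "(1 - \<beta> * t0) / (1 - t0) = 0"
    using \<open>1 < \<beta>\<close> by (simp add: t0_def)
  ultimately have rhs: "((\<lambda>t. (1 - \<beta> * t) / (1 - t)) \<longlongrightarrow> 0) (at_left t0)"
    by simp
  have near: "eventually (\<lambda>t. 0 < t \<and> t * \<beta> < 1) (at_left t0)"
    using eventually_at_left_real[OF t0(1)]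
  proof eventually_elim
    case (elim t)
    then show ?case using \<open>1 < \<beta>\<close> by (simp add: t0_def field_simps)
  qed
  have "0 \<le> 1 - char_fun d t0"
  proof (rule tendsto_lowerbound[OF lhs])
    show "eventually (\<lambda>t. 0 \<le> 1 - char_fun d t) (at_left t0)"
      using near by (rule eventually_mono)
        (meson char_fun_bounds(1)[OF lyn \<open>1 < \<beta>\<close> lim] less_imp_le)
  qed simp
  moreover have "1 - char_fun d t0 \<le> 0"
  proof (rule tendsto_le[OF _ rhs lhs])
    show "eventually (\<lambda>t. 1 - char_fun d t \<le> (1 - \<beta> * t) / (1 - t)) (at_left t0)"
      using near by (rule eventually_mono) (meson char_fun_bounds(2)[OF lyn \<open>1 < \<beta>\<close> lim])
  qed simp
  ultimately show ?thesis by (simp add: t0_def)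
qed

theorem proposition3:
  fixes d :: "nat \<Rightarrow> nat" and \<beta> :: real
  assumes "alt_lyndon d"
    and "has_entropy (alt_lyndon_system d) (ln \<beta>)"
    and "\<beta> > 0" and "ln \<beta> > 0"
  shows "char_solution d \<beta> \<and> (\<forall>x. char_solution d x \<longrightarrow> x \<le> \<beta>)"
proof -
  note lyn = assms(1)
  have lim: "(\<lambda>n. ln (real (num_admissible d n)) / real n) \<longlonglongrightarrow> ln \<beta>"
    using assms(2)
    unfolding has_entropy_def num_admissible_def factors_alt_lyndon_system[OF lyn] .
  have "1 < \<beta>" using assms(3,4) by simp
  have "x \<le> \<beta>" if "char_solution d x" for x
  proof (rule ccontr)
    assume "\<not> x \<le> \<beta>"
    then have "0 < 1 / x" "1 / x * \<beta> < 1" using \<open>1 < \<beta>\<close> by (auto simp: field_simps)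
    then have "char_fun d (1 / x) < 1"
      using char_fun_bounds(1)[OF lyn \<open>1 < \<beta>\<close> lim] by simp
    moreover have "char_fun d (1 / x) = 1"
      using that char_solution_iff[OF lyn] \<open>\<not> x \<le> \<beta>\<close> \<open>1 < \<beta>\<close> by simp
    ultimately show False by simp
  qed
  moreover have "char_solution d \<beta>"
    using char_solution_iff[OF lyn \<open>1 < \<beta>\<close>] char_fun_inverse_growth_rate[OF lyn \<open>1 < \<beta>\<close> lim]
    by simp
  ultimately show ?thesis by blast
qed

end
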